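(* Let $r,m\in\mathbb{N}$ and let $G$ be a graph with $\mathrm{scol}_r(G)=m$. Then every vertex of $G$ has finite $(r,m-1)$-rank.
   Context: Strong coloring numbers (with the following orientation convention): for a linear order $\le$ on $V(G)$, a vertex $w$ is strongly $r$-reachable from $v$ if $w\ge v$ and there is a path from $v$ to $w$ of length at most $r$ all of whose vertices other than $v$ and $w$ are smaller than $v$. $\mathrm{scol}_r(G)$ is the minimum over all linear orders of $V(G)$ of the maximum, over vertices $v$, of the number of vertices strongly $r$-reachable from $v$. $N_r^G(v)$ is the closed $r$-neighborhood of $v$; $G-S$ is the subgraph induced on $V(G)\setminus S$. The $(r,m)$-rank of vertices of $G$ (values in $\mathbb{N}\cup\{\infty\}$) is defined by: initially every vertex has rank $\infty$; in rounds $i=1,2,\dots$, every vertex $v$ currently of rank $\infty$ receives rank $i$ if there exists $S\subseteq V(G)\setminus\{v\}$ with $|S|\le m$ such that every vertex of $N_r^{G-S}(v)\setminus\{v\}$ received a finite rank in rounds $1,\dots,i-1$; the procedure stops when all ranks are finite or a round assigns no new rank. *)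

theory Defs
  imports Main
begin

definition fin_graph :: "'a set \<Rightarrow> ('a \<Rightarrow> 'a \<Rightarrow> bool) \<Rightarrow> bool" where
  "fin_graph V E \<longleftrightarrow> finite V \<and> (\<forall>x y. E x y \<longrightarrow> x \<in> V \<and> y \<in> V)
     \<and> (\<forall>x y. E x y \<longrightarrow> E y x) \<and> (\<forall>x. \<not> E x x)"

text \<open>A path in the graph with vertex set V (vertex list, length of path = length ps - 1).\<close>
definition is_path :: "'a set \<Rightarrow> ('a \<Rightarrow> 'a \<Rightarrow> bool) \<Rightarrow> 'a list \<Rightarrow> bool" where
  "is_path V E ps \<longleftrightarrow> ps \<noteq> [] \<and> distinct ps \<and> set ps \<subseteq> V
     \<and> (\<forall>i < length ps - 1. E (ps ! i) (ps ! Suc i))"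

text \<open>Vertices strongly r-reachable from v w.r.t. the linear order L (a set of pairs, (x,y) \<in> L meaning x \<le> y).\<close>
definition sreach :: "'a set \<Rightarrow> ('a \<Rightarrow> 'a \<Rightarrow> bool) \<Rightarrow> 'a rel \<Rightarrow> nat \<Rightarrow> 'a \<Rightarrow> 'a set" where
  "sreach V E L r v = {w \<in> V. (v, w) \<in> L \<and>
     (\<exists>ps. is_path V E ps \<and> hd ps = v \<and> last ps = w \<and> length ps \<le> r + 1
        \<and> (\<forall>u \<in> set (butlast (tl ps)). (u, v) \<in> L \<and> u \<noteq> v))}"

definition scol :: "nat \<Rightarrow> 'a set \<Rightarrow> ('a \<Rightarrow> 'a \<Rightarrow> bool) \<Rightarrow> nat" where
  "scol r V E = (LEAST k. \<exists>L. linear_order_on V L \<and> (\<forall>v \<in> V. card (sreach V E L r v) \<le> k))"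

definition nbhd_minus :: "'a set \<Rightarrow> ('a \<Rightarrow> 'a \<Rightarrow> bool) \<Rightarrow> 'a set \<Rightarrow> nat \<Rightarrow> 'a \<Rightarrow> 'a set" where
  "nbhd_minus V E S r v = {u \<in> V - S. \<exists>ps. is_path (V - S) E ps \<and> hd ps = v \<and> last ps = u
      \<and> length ps \<le> r + 1}"

text \<open>ranked V E r m i: the set of vertices that received a rank in rounds 1..i.\<close>
fun ranked :: "'a set \<Rightarrow> ('a \<Rightarrow> 'a \<Rightarrow> bool) \<Rightarrow> nat \<Rightarrow> nat \<Rightarrow> nat \<Rightarrow> 'a set" where
  "ranked V E r m 0 = {}"
| "ranked V E r m (Suc i) = ranked V E r m i \<union>
     {v \<in> V. \<exists>S. S \<subseteq> V - {v} \<and> card S \<le> m \<and> nbhd_minus V E S r v - {v} \<subseteq> ranked V E r m i}"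

definition finite_rank :: "'a set \<Rightarrow> ('a \<Rightarrow> 'a \<Rightarrow> bool) \<Rightarrow> nat \<Rightarrow> nat \<Rightarrow> 'a \<Rightarrow> bool" where
  "finite_rank V E r m v \<longleftrightarrow> (\<exists>i. v \<in> ranked V E r m i)"

end

theory Submission
  imports Defs
begin

text \<open>Fix a linear order \<open>L\<close> attaining \<open>scol\<^sub>r(G) = m\<close> and let \<open>S\<^sub>v\<close> be the set of
  vertices \<open>w \<noteq> v\<close> strongly \<open>r\<close>-reachable from \<open>v\<close>, so \<open>|S\<^sub>v| \<le> m - 1\<close>. Every vertex
  \<open>u \<noteq> v\<close> within distance \<open>r\<close> of \<open>v\<close> in \<open>G - S\<^sub>v\<close> lies below \<open>v\<close>: along a short path
  from \<open>v\<close> in \<open>G - S\<^sub>v\<close>, the first vertex not below \<open>v\<close> would be strongly \<open>r\<close>-reachable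
  from \<open>v\<close>, hence in \<open>S\<^sub>v\<close>. So deleting \<open>S\<^sub>v\<close> leaves only smaller vertices in the
  \<open>r\<close>-neighbourhood of \<open>v\<close>, and well-founded induction along \<open>L\<close> gives every vertex a
  finite \<open>(r, m - 1)\<close>-rank.\<close>

lemma is_path_mono: "is_path V E ps \<Longrightarrow> V \<subseteq> W \<Longrightarrow> is_path W E ps"
  unfolding is_path_def by blast

lemma is_path_take: "is_path V E ps \<Longrightarrow> 0 < n \<Longrightarrow> is_path V E (take n ps)"
  unfolding is_path_def by (auto simp: take_eq_Nil dest: in_set_takeD)

lemma self_in_sreach: "v \<in> V \<Longrightarrow> (v, v) \<in> L \<Longrightarrow> v \<in> sreach V E L r v"
  unfolding sreach_def by (auto intro!: exI[of _ "[v]"] simp: is_path_def)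

lemma scol_attained:
  assumes "finite V"
  shows "\<exists>L. linear_order_on V L \<and> (\<forall>v \<in> V. card (sreach V E L r v) \<le> scol r V E)"
proof -
  obtain W where "well_order_on V W" using well_order_on by blast
  then have "linear_order_on V W" unfolding well_order_on_def by blast
  moreover have "\<forall>v \<in> V. card (sreach V E W r v) \<le> card V"
    using assms by (auto intro: card_mono simp: sreach_def)
  ultimately have "\<exists>k L. linear_order_on V L \<and> (\<forall>v \<in> V. card (sreach V E L r v) \<le> k)"
    by blast
  then show ?thesis unfolding scol_def by (rule LeastI_ex)
qed

lemma path_avoiding_sreach_below:
  assumes lin: "linear_order_on V L"
    and path: "is_path (V - S) E ps" and hd: "hd ps = v" and len: "length ps \<le> r + 1"
    and guard: "sreach V E L r v - {v} \<subseteq> S"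
  shows "0 < i \<Longrightarrow> i < length ps \<Longrightarrow> (ps ! i, v) \<in> L - Id"
proof (induction i rule: less_induct)
  case (less i)
  have ne: "ps \<noteq> []" and dist: "distinct ps" and ps_sub: "set ps \<subseteq> V - S"
    using path unfolding is_path_def by auto
  have v_first: "ps ! 0 = v" using hd ne by (simp add: hd_conv_nth)
  have "ps ! i \<noteq> v"
    using nth_eq_iff_index_eq[OF dist less.prems(2), of 0] ne less.prems v_first by auto
  moreover have "ps ! i \<in> V" "v \<in> V" "ps ! i \<notin> S"
    using ps_sub nth_mem[OF less.prems(2)] hd_in_set[OF ne] hd by auto
  moreover have "(v, ps ! i) \<notin> L"
  proof
    assume up: "(v, ps ! i) \<in> L"
    let ?qs = "take (Suc i) ps"
    have "is_path V E ?qs" using is_path_take[OF is_path_mono[OF path]] by blast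
    moreover have "hd ?qs = v" "last ?qs = ps ! i" "length ?qs \<le> r + 1"
      using hd ne less.prems len by (auto simp: hd_take last_conv_nth)
    moreover have "(u, v) \<in> L \<and> u \<noteq> v" if interior: "u \<in> set (butlast (tl ?qs))" for u
    proof -
      obtain k where "k < i - 1" "u = ps ! Suc k"
        using interior less.prems(2) by (auto simp: in_set_conv_nth nth_butlast nth_tl)
      then show ?thesis using less.IH[of "Suc k"] less.prems by auto
    qed
    ultimately have "ps ! i \<in> sreach V E L r v"
      using up \<open>ps ! i \<in> V\<close> unfolding sreach_def by blast
    then show False using guard \<open>ps ! i \<noteq> v\<close> \<open>ps ! i \<notin> S\<close> by blast
  qed
  ultimately show ?case
    using lin unfolding linear_order_on_def total_on_def by blast
qed

lemma nbhd_minus_sreach_below: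
  assumes "linear_order_on V L" and "u \<in> nbhd_minus V E (sreach V E L r v - {v}) r v - {v}"
  shows "(u, v) \<in> L - Id"
proof -
  obtain ps where path: "is_path (V - (sreach V E L r v - {v})) E ps"
    and hd: "hd ps = v" and last: "last ps = u" and len: "length ps \<le> r + 1" and "u \<noteq> v"
    using assms(2) unfolding nbhd_minus_def by auto
  have "ps \<noteq> []" using path unfolding is_path_def by auto
  then have "u = ps ! (length ps - 1)" using last by (simp add: last_conv_nth)
  moreover have "0 < length ps - 1"
    using hd last \<open>u \<noteq> v\<close> \<open>ps \<noteq> []\<close> by (cases ps) auto
  ultimately show ?thesis
    using path_avoiding_sreach_below[OF assms(1) path hd len] by simp
qed

lemma ranked_mono: "i \<le> j \<Longrightarrow> ranked V E r m i \<subseteq> ranked V E r m j"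
  by (rule lift_Suc_mono_le[of "ranked V E r m"]) auto

lemma finite_set_ranked:
  assumes "finite U" and "\<forall>u \<in> U. finite_rank V E r m u"
  shows "\<exists>i. U \<subseteq> ranked V E r m i"
  using assms
proof (induction U rule: finite_induct)
  case (insert u U)
  then obtain i j where "U \<subseteq> ranked V E r m i" "u \<in> ranked V E r m j"
    unfolding finite_rank_def by auto
  then have "insert u U \<subseteq> ranked V E r m (max i j)"
    using ranked_mono[of i "max i j" V E r m] ranked_mono[of j "max i j" V E r m] by auto
  then show ?case by blast
qed simp

lemma finite_rank_if_guarded:
  assumes "finite V" and "v \<in> V" and "S \<subseteq> V - {v}" and "card S \<le> m"
    and "\<forall>u \<in> nbhd_minus V E S r v - {v}. finite_rank V E r m u"
  shows "finite_rank V E r m v"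
proof -
  have "finite (nbhd_minus V E S r v - {v})"
    using assms(1) by (rule finite_subset[rotated]) (auto simp: nbhd_minus_def)
  then obtain i where "nbhd_minus V E S r v - {v} \<subseteq> ranked V E r m i"
    using finite_set_ranked assms(5) by blast
  then have "v \<in> ranked V E r m (Suc i)" using assms(2-4) by auto
  then show ?thesis unfolding finite_rank_def by blast
qed

lemma card_sreach_minus_self:
  assumes "finite V" and "linear_order_on V L" and "v \<in> V"
  shows "card (sreach V E L r v - {v}) = card (sreach V E L r v) - 1"
proof -
  have "finite (sreach V E L r v)" using assms(1) by (auto intro: finite_subset simp: sreach_def)
  moreover have "v \<in> sreach V E L r v"
    using assms(2,3) by (intro self_in_sreach) (auto simp: order_on_defs refl_on_def)
  ultimately show ?thesis by simp
qed

lemma finite_rank_if_sreach_bounded: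
  assumes fin: "finite V" and lin: "linear_order_on V L"
    and bound: "\<forall>v \<in> V. card (sreach V E L r v) \<le> m"
  shows "\<forall>v \<in> V. finite_rank V E r (m - 1) v"
proof -
  have "wf ((L - Id) \<inter> V \<times> V)"
    using fin lin partial_order_on_acyclic[of V L]
    by (intro finite_acyclic_wf) (auto intro: acyclic_subset simp: linear_order_on_def)
  then have "v \<in> V \<longrightarrow> finite_rank V E r (m - 1) v" for v
  proof (induction v)
    case (less v)
    let ?S = "sreach V E L r v - {v}"
    show ?case
    proof
      assume "v \<in> V"
      then have "card ?S \<le> m - 1"
        using card_sreach_minus_self[OF fin lin] bound by (simp add: diff_le_mono)
      moreover have "?S \<subseteq> V - {v}" by (auto simp: sreach_def)
      moreover have "finite_rank V E r (m - 1) u" if "u \<in> nbhd_minus V E ?S r v - {v}" for u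
      proof -
        have "(u, v) \<in> L - Id" using nbhd_minus_sreach_below[OF lin that] .
        moreover have "u \<in> V" using that by (simp add: nbhd_minus_def)
        ultimately show ?thesis using less.IH \<open>v \<in> V\<close> by blast
      qed
      ultimately show "finite_rank V E r (m - 1) v"
        using finite_rank_if_guarded[OF fin \<open>v \<in> V\<close>] by blast
    qed
  qed
  then show ?thesis by blast
qed

theorem lemma3p6:
  fixes V :: "'a set" and E :: "'a \<Rightarrow> 'a \<Rightarrow> bool" and r m :: nat
  assumes "fin_graph V E"
    and "scol r V E = m"
  shows "\<forall>v \<in> V. finite_rank V E r (m - 1) v"
proof -
  have fin: "finite V" using assms(1) unfolding fin_graph_def by auto
  obtain L where "linear_order_on V L" and "\<forall>v \<in> V. card (sreach V E L r v) \<le> m"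
    using scol_attained[OF fin] assms(2) by blast
  with fin show ?thesis by (rule finite_rank_if_sreach_bounded)
qed

end
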